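(* Let $D,D'$ be $n$-dimensional $(L,A)$-quasidisks in a metric space $X$ with $d_H(\partial D,\partial D')\le A_1$ and $D\subset N_{A_2}(D')$. Then there is $C$ depending only on $L,A,A_1,A_2,n$ such that $d_H(D,D')\le C$.
   Context: An $n$-dimensional $(L,A)$-quasidisk is the image $D=q(B)$ of an $(L,A)$-quasi-isometric embedding $q$ of a closed metric ball $B\subset\mathbb R^n$ into $X$ (i.e. $L^{-1}|x-y|-A\le d(q x,q y)\le L|x-y|+A$); its boundary is $\partial D=q(\partial B)$. $d_H$ is Hausdorff distance and $N_r$ the open $r$-neighborhood. *)

theory Defs
  imports "HOL-Analysis.Analysis"
begin

definition qi_embedding ::
  "'a set \<Rightarrow> ('a \<Rightarrow> 'a \<Rightarrow> real) \<Rightarrow> real \<Rightarrow> real \<Rightarrow> (real^'n \<Rightarrow> 'a) \<Rightarrow> real^'n \<Rightarrow> real \<Rightarrow> bool" where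
  "qi_embedding M d L A q c r \<longleftrightarrow>
     q ` cball c r \<subseteq> M \<and>
     (\<forall>x\<in>cball c r. \<forall>y\<in>cball c r.
        dist x y / L - A \<le> d (q x) (q y) \<and> d (q x) (q y) \<le> L * dist x y + A)"

definition setdist_e :: "('a \<Rightarrow> 'a \<Rightarrow> real) \<Rightarrow> 'a \<Rightarrow> 'a set \<Rightarrow> ereal" where
  "setdist_e d x T = (INF t\<in>T. ereal (d x t))"

definition hausdorff_dist_e :: "('a \<Rightarrow> 'a \<Rightarrow> real) \<Rightarrow> 'a set \<Rightarrow> 'a set \<Rightarrow> ereal" where
  "hausdorff_dist_e d S T = max (SUP s\<in>S. setdist_e d s T) (SUP t\<in>T. setdist_e d t S)"

definition nbhd :: "'a set \<Rightarrow> ('a \<Rightarrow> 'a \<Rightarrow> real) \<Rightarrow> real \<Rightarrow> 'a set \<Rightarrow> 'a set" where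
  "nbhd M d r T = {x\<in>M. \<exists>y\<in>T. d x y < r}"

end

theory Submission
  imports Defs
begin

text \<open>
  Pull the problem back to the Euclidean balls \<open>B\<close>, \<open>B'\<close>. Choosing nearby points gives a coarse
  Lipschitz map \<open>p : B \<rightarrow> B'\<close> with \<open>q' \<circ> p\<close> close to \<open>q\<close>, and a coarse Lipschitz map
  \<open>s : \<partial>B' \<rightarrow> B\<close> with \<open>q \<circ> s\<close> close to \<open>q'\<close>, so \<open>p \<circ> s\<close> moves points of \<open>\<partial>B'\<close> a bounded
  distance. Replacing \<open>p\<close> and \<open>s\<close> by continuous approximations (partition of unity) and extending
  \<open>s\<close> over \<open>B'\<close> (Dugundji) yields a continuous self-map of \<open>B'\<close> that is close to the identity
  on \<open>\<partial>B'\<close>. By Brouwer's theorem its image contains every point of \<open>B'\<close> that is not close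
  to \<open>\<partial>B'\<close>; so every point of \<open>D'\<close> is near the image of \<open>p\<close>, hence near \<open>D\<close>, or near
  \<open>\<partial>D'\<close>, hence near \<open>\<partial>D\<close>.
\<close>

lemma convex_combination_in_cball:
  fixes v :: "'i \<Rightarrow> 'b::real_normed_vector"
  assumes "finite I" "convex K" "(\<Sum>i\<in>I. w i) = 1" "\<And>i. i \<in> I \<Longrightarrow> w i \<ge> 0"
    and near: "\<And>i. i \<in> I \<Longrightarrow> w i \<noteq> 0 \<Longrightarrow> v i \<in> K \<and> dist y (v i) \<le> E"
  shows "(\<Sum>i\<in>I. w i *\<^sub>R v i) \<in> K \<inter> cball y E"
proof -
  let ?J = "{i \<in> I. w i \<noteq> 0}"
  have "(\<Sum>i\<in>I. w i *\<^sub>R v i) = (\<Sum>i\<in>?J. w i *\<^sub>R v i)" "(\<Sum>i\<in>I. w i) = (\<Sum>i\<in>?J. w i)"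
    by (rule sum.mono_neutral_right; use \<open>finite I\<close> in auto)+
  moreover have "(\<Sum>i\<in>?J. w i *\<^sub>R v i) \<in> K \<inter> cball y E" if "(\<Sum>i\<in>?J. w i) = 1"
    by (rule convex_sum) (use assms that in \<open>auto intro: convex_Int\<close>)
  ultimately show ?thesis using assms(3) by simp
qed

lemma coarse_map_continuous_approximation:
  fixes g :: "'a::euclidean_space \<Rightarrow> 'b::real_normed_vector"
  assumes "compact S" "convex K" "g ` S \<subseteq> K"
    and coarse: "\<And>x y. x \<in> S \<Longrightarrow> y \<in> S \<Longrightarrow> dist x y < 1 \<Longrightarrow> dist (g x) (g y) \<le> E"
  obtains h where "continuous_on S h" "h ` S \<subseteq> K" "\<And>x. x \<in> S \<Longrightarrow> dist (h x) (g x) \<le> E"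
proof -
  obtain Z where Z: "Z \<subseteq> S" "finite Z" "S \<subseteq> (\<Union>z\<in>Z. ball z (1/2))"
    by (rule compactE_image[OF \<open>compact S\<close>, of S "\<lambda>z. ball z (1/2)"]) auto
  define \<phi> where "\<phi> z x = max 0 (1/2 - dist x z)" for z x :: 'a
  define s where "s x = (\<Sum>z\<in>Z. \<phi> z x)" for x
  define h where "h x = (\<Sum>z\<in>Z. (\<phi> z x / s x) *\<^sub>R g z)" for x
  have \<phi>_nonneg: "\<phi> z x \<ge> 0" for z x by (simp add: \<phi>_def)
  have s_pos: "s x > 0" if "x \<in> S" for x
  proof -
    from Z(3) that obtain z where z: "z \<in> Z" "dist z x < 1/2" by auto
    then have "\<phi> z x > 0" by (simp add: \<phi>_def dist_commute)
    moreover have "\<phi> z x \<le> s x" unfolding s_def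
      by (rule member_le_sum) (use z \<phi>_nonneg Z in auto)
    ultimately show ?thesis by linarith
  qed
  have cont_\<phi>: "continuous_on S (\<phi> z)" for z
    unfolding \<phi>_def by (intro continuous_intros)
  have "continuous_on S s" unfolding s_def
    by (intro continuous_on_sum cont_\<phi>)
  moreover have "\<forall>x\<in>S. s x \<noteq> 0" using s_pos by force
  ultimately have "continuous_on S h" unfolding h_def
    by (intro continuous_on_sum continuous_on_scaleR continuous_on_divide cont_\<phi> continuous_on_const)
  moreover have "h x \<in> K \<inter> cball (g x) E" if x: "x \<in> S" for x
    unfolding h_def
  proof (rule convex_combination_in_cball[OF \<open>finite Z\<close> \<open>convex K\<close>])
    have "(\<Sum>z\<in>Z. \<phi> z x / s x) = s x / s x"
      unfolding s_def by (rule sum_divide_distrib[symmetric])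
    then show "(\<Sum>z\<in>Z. \<phi> z x / s x) = 1" using s_pos[OF x] by simp
    show "\<phi> z x / s x \<ge> 0" for z using s_pos[OF x] \<phi>_nonneg by simp
    show "g z \<in> K \<and> dist (g x) (g z) \<le> E" if "z \<in> Z" "\<phi> z x / s x \<noteq> 0" for z
    proof -
      have "z \<in> S" "dist x z < 1" using that Z by (auto simp: \<phi>_def)
      then show ?thesis using coarse[OF x] \<open>g ` S \<subseteq> K\<close> by auto
    qed
  qed
  ultimately show ?thesis
    by (intro that[of h]) (auto simp: dist_commute)
qed

lemma sphere_point_closer_than_exterior:
  fixes x z :: "'a::euclidean_space"
  assumes x: "x \<in> cball c r" and z: "z \<notin> cball c r"
  obtains w where "w \<in> sphere c r" "dist w x \<le> dist z x"
proof -
  define f where "f t = dist c (x + t *\<^sub>R (z - x))" for t :: real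
  have "\<exists>t. 0 \<le> t \<and> t \<le> 1 \<and> f t = r"
  proof (rule IVT')
    show "f 0 \<le> r" using x by (simp add: f_def)
    show "r \<le> f 1" using z by (simp add: f_def)
    show "continuous_on {0..1} f" unfolding f_def by (intro continuous_intros)
  qed simp
  then obtain t where t: "0 \<le> t" "t \<le> 1" "f t = r" by blast
  define w where "w = x + t *\<^sub>R (z - x)"
  have "w \<in> sphere c r" using t unfolding w_def f_def by simp
  moreover have "dist w x = t * dist z x" unfolding w_def using t by (simp add: dist_norm)
  then have "dist w x \<le> dist z x" using t by (simp add: mult_left_le_one_le)
  ultimately show thesis by (rule that)
qed

lemma extend_near_identity_beyond_sphere:
  fixes G :: "'a::euclidean_space \<Rightarrow> 'a"
  assumes G: "continuous_on (cball c r) G"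
    and near: "\<And>y. y \<in> sphere c r \<Longrightarrow> dist (G y) y \<le> K"
    and "K \<ge> 0" "r < R"
  obtains H where "continuous_on (cball c R) H" "\<And>y. y \<in> cball c r \<Longrightarrow> H y = G y"
    "\<And>y. y \<in> cball c R \<Longrightarrow> y \<notin> cball c r \<Longrightarrow> dist (H y) y \<le> K"
proof -
  define Ann where "Ann = cball c R - ball c r"
  have closed_Ann: "closed Ann" unfolding Ann_def by (intro closed_Diff) auto
  obtain D where D: "continuous_on Ann D" "D ` Ann \<subseteq> cball 0 K"
    "\<And>y. y \<in> sphere c r \<Longrightarrow> D y = G y - y"
  proof (rule Dugundji[OF convex_cball])
    show "cball 0 K \<noteq> {}" using \<open>K \<ge> 0\<close> by auto
    show "closedin (top_of_set Ann) (sphere c r)"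
      by (rule closed_subset) (use \<open>r < R\<close> in \<open>auto simp: Ann_def\<close>)
    show "continuous_on (sphere c r) (\<lambda>y. G y - y)"
      by (intro continuous_intros continuous_on_subset[OF G]) auto
    show "(\<lambda>y. G y - y) ` sphere c r \<subseteq> cball 0 K"
      using near by (auto simp: mem_cball_0 dist_norm norm_minus_commute simp del: mem_sphere)
  qed blast
  define H where "H y = (if y \<in> cball c r then G y else y + D y)" for y
  have "cball c R = cball c r \<union> Ann" unfolding Ann_def using \<open>r < R\<close> by auto
  moreover have "continuous_on (cball c r \<union> Ann) H" unfolding H_def
  proof (rule continuous_on_cases)
    show "continuous_on Ann (\<lambda>y. y + D y)" by (intro continuous_intros D(1))
    show "\<forall>y. y \<in> cball c r \<and> y \<notin> cball c r \<or> y \<in> Ann \<and> y \<in> cball c r \<longrightarrow> G y = y + D y"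
      using D(3) by (auto simp: Ann_def)
  qed (use G closed_Ann in auto)
  moreover have "dist (H y) y \<le> K" if "y \<in> cball c R" "y \<notin> cball c r" for y
  proof -
    have "y \<in> Ann" using that by (auto simp: Ann_def)
    then have "D y \<in> cball 0 K" using D(2) by blast
    then show ?thesis using that by (simp add: H_def dist_norm)
  qed
  ultimately show thesis using that[of H] by (simp add: H_def)
qed

lemma ball_self_map_covers_away_from_sphere:
  fixes G :: "'a::euclidean_space \<Rightarrow> 'a"
  assumes G: "continuous_on (cball c r) G" "G ` cball c r \<subseteq> cball c r"
    and near: "\<And>y. y \<in> sphere c r \<Longrightarrow> dist (G y) y \<le> K"
    and x: "x \<in> cball c r"
  shows "x \<in> G ` cball c r \<or> (\<exists>w\<in>sphere c r. dist w x \<le> K)"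
proof -
  have "r \<ge> 0" using x zero_le_dist[of c x] by (simp del: zero_le_dist)
  then have "sphere c r \<noteq> {}" by simp
  then obtain w0 where "w0 \<in> sphere c r" by blast
  then have "K \<ge> 0" using near[of w0] zero_le_dist[of "G w0" w0] by linarith
  \<comment> \<open>On \<open>cball c R\<close> the extended map moves points by at most \<open>2 r + K\<close>, as Brouwer surjectivity needs.\<close>
  define R where "R = 3 * r + K + 1"
  have "r < R" using \<open>r \<ge> 0\<close> \<open>K \<ge> 0\<close> by (simp add: R_def)
  obtain H where H: "continuous_on (cball c R) H" "\<And>y. y \<in> cball c r \<Longrightarrow> H y = G y"
    "\<And>y. y \<in> cball c R \<Longrightarrow> y \<notin> cball c r \<Longrightarrow> dist (H y) y \<le> K"
    using extend_near_identity_beyond_sphere[OF G(1) near \<open>K \<ge> 0\<close> \<open>r < R\<close>] by blast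
  have "\<exists>z\<in>cball c R. H z = x"
  proof (rule brouwer_surjective_cball[OF H(1) _ singletonI])
    show "R > 0" using \<open>r < R\<close> \<open>r \<ge> 0\<close> by linarith
    fix u y assume u: "u \<in> {x}" and y: "y \<in> cball c R"
    have "norm (y - H y) \<le> 2 * r + K"
    proof (cases "y \<in> cball c r")
      case True
      then have "G y \<in> cball c r" using G(2) by blast
      have "norm (y - G y) \<le> dist y c + dist c (G y)"
        by (metis dist_norm dist_triangle)
      also have "\<dots> \<le> 2 * r" using True \<open>G y \<in> cball c r\<close> by (simp add: dist_commute)
      finally have "norm (y - G y) \<le> 2 * r" .
      then show ?thesis using True H(2) \<open>K \<ge> 0\<close> by simp
    next
      case False
      then show ?thesis using H(3)[OF y False] \<open>r \<ge> 0\<close> by (simp add: dist_norm norm_minus_commute)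
    qed
    moreover have "dist c (x + (y - H y)) \<le> dist c x + norm (y - H y)"
      using dist_triangle[of c "x + (y - H y)" x] by (simp add: dist_norm norm_minus_commute)
    ultimately have "dist c (x + (y - H y)) \<le> R"
      using x unfolding R_def by simp
    then show "u + (y - H y) \<in> cball c R" using u by simp
  qed
  then obtain z where z: "z \<in> cball c R" "H z = x" by blast
  show ?thesis
  proof (cases "z \<in> cball c r")
    case True
    then show ?thesis using z H(2) by force
  next
    case False
    obtain w where "w \<in> sphere c r" "dist w x \<le> dist z x"
      using sphere_point_closer_than_exterior[OF x False] .
    moreover have "dist z x \<le> K" using H(3)[OF z(1) False] z(2) by (simp add: dist_commute)
    ultimately show ?thesis by (meson order.trans)
  qed
qed

lemma coarse_ball_map_covers_away_from_sphere:
  fixes p s :: "'a::euclidean_space \<Rightarrow> 'a"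
  assumes "r \<ge> 0"
    and p_into: "p ` cball c r \<subseteq> cball c' r'"
    and p_coarse: "\<And>a b. a \<in> cball c r \<Longrightarrow> b \<in> cball c r \<Longrightarrow> dist (p a) (p b) \<le> \<alpha> * dist a b + \<beta>"
    and s_into: "s ` sphere c' r' \<subseteq> cball c r"
    and s_coarse: "\<And>a b. a \<in> sphere c' r' \<Longrightarrow> b \<in> sphere c' r' \<Longrightarrow> dist (s a) (s b) \<le> \<gamma> * dist a b + \<delta>"
    and ps: "\<And>y. y \<in> sphere c' r' \<Longrightarrow> dist (p (s y)) y \<le> F"
    and "\<alpha> \<ge> 0" "\<gamma> \<ge> 0"
    and x': "x' \<in> cball c' r'"
  shows "(\<exists>w\<in>sphere c' r'. dist w x' \<le> (\<alpha> + \<beta>) + (\<alpha> * (\<gamma> + \<delta>) + \<beta>) + F)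
       \<or> (\<exists>b\<in>cball c r. dist x' (p b) \<le> \<alpha> + \<beta>)"
proof -
  let ?B = "cball c r" and ?B' = "cball c' r'" and ?S' = "sphere c' r'"
  have p_modulus: "dist (p a) (p b) \<le> \<alpha> + \<beta>" if "a \<in> ?B" "b \<in> ?B" "dist a b < 1" for a b
    using p_coarse[OF that(1,2)] mult_left_le[of "dist a b" \<alpha>] that(3) \<open>\<alpha> \<ge> 0\<close> by linarith
  obtain P where P: "continuous_on ?B P" "P ` ?B \<subseteq> ?B'" "\<And>x. x \<in> ?B \<Longrightarrow> dist (P x) (p x) \<le> \<alpha> + \<beta>"
    using coarse_map_continuous_approximation[OF compact_cball convex_cball p_into p_modulus] by blast
  have s_modulus: "dist (s a) (s b) \<le> \<gamma> + \<delta>" if "a \<in> ?S'" "b \<in> ?S'" "dist a b < 1" for a b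
    using s_coarse[OF that(1,2)] mult_left_le[of "dist a b" \<gamma>] that(3) \<open>\<gamma> \<ge> 0\<close> by linarith
  obtain S0 where S0: "continuous_on ?S' S0" "S0 ` ?S' \<subseteq> ?B" "\<And>y. y \<in> ?S' \<Longrightarrow> dist (S0 y) (s y) \<le> \<gamma> + \<delta>"
    using coarse_map_continuous_approximation[OF compact_sphere convex_cball s_into s_modulus] by blast
  obtain S1 where S1: "continuous_on ?B' S1" "S1 ` ?B' \<subseteq> ?B" "\<And>y. y \<in> ?S' \<Longrightarrow> S1 y = S0 y"
  proof (rule Dugundji[OF convex_cball _ _ S0(1,2)])
    show "?B \<noteq> {}" using \<open>r \<ge> 0\<close> by simp
    show "closedin (top_of_set ?B') ?S'" by (rule closed_subset) auto
  qed blast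
  define G where "G = P \<circ> S1"
  have "continuous_on ?B' G" unfolding G_def
    by (rule continuous_on_compose[OF S1(1) continuous_on_subset[OF P(1) S1(2)]])
  moreover have "G ` ?B' \<subseteq> ?B'" using S1(2) P(2) unfolding G_def by auto
  moreover have "dist (G y) y \<le> (\<alpha> + \<beta>) + (\<alpha> * (\<gamma> + \<delta>) + \<beta>) + F" if y: "y \<in> ?S'" for y
  proof -
    have S1y: "S1 y \<in> ?B" using S1(2) sphere_cball y by blast
    have sy: "s y \<in> ?B" using s_into y by blast
    have "dist (G y) (p (S1 y)) \<le> \<alpha> + \<beta>" unfolding G_def using P(3)[OF S1y] by simp
    moreover have "dist (p (S1 y)) (p (s y)) \<le> \<alpha> * (\<gamma> + \<delta>) + \<beta>"
    proof -
      have "dist (S1 y) (s y) \<le> \<gamma> + \<delta>" using S0(3)[OF y] S1(3)[OF y] by simp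
      then have "\<alpha> * dist (S1 y) (s y) \<le> \<alpha> * (\<gamma> + \<delta>)" using \<open>\<alpha> \<ge> 0\<close> by (rule mult_left_mono)
      then show ?thesis using p_coarse[OF S1y sy] by linarith
    qed
    moreover have "dist (p (s y)) y \<le> F" using ps[OF y] .
    ultimately show ?thesis
      using dist_triangle[of "G y" y "p (S1 y)"] dist_triangle[of "p (S1 y)" y "p (s y)"] by linarith
  qed
  ultimately have "x' \<in> G ` ?B' \<or> (\<exists>w\<in>?S'. dist w x' \<le> (\<alpha> + \<beta>) + (\<alpha> * (\<gamma> + \<delta>) + \<beta>) + F)"
    by (rule ball_self_map_covers_away_from_sphere[OF _ _ _ x'])
  moreover have "\<exists>b\<in>?B. dist x' (p b) \<le> \<alpha> + \<beta>" if "x' \<in> G ` ?B'"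
  proof -
    from that obtain z where "z \<in> ?B'" "x' = P (S1 z)" unfolding G_def by auto
    moreover have "S1 z \<in> ?B" using S1(2) \<open>z \<in> ?B'\<close> by blast
    ultimately show ?thesis using P(3) by blast
  qed
  ultimately show ?thesis by blast
qed

lemma qi_embedding_in_space:
  "qi_embedding M d L A q c r \<Longrightarrow> x \<in> cball c r \<Longrightarrow> q x \<in> M"
  unfolding qi_embedding_def by blast

lemma qi_embedding_upper:
  "qi_embedding M d L A q c r \<Longrightarrow> x \<in> cball c r \<Longrightarrow> y \<in> cball c r
    \<Longrightarrow> d (q x) (q y) \<le> L * dist x y + A"
  unfolding qi_embedding_def by blast

lemma qi_embedding_lower:
  assumes "qi_embedding M d L A q c r" "L > 0" "x \<in> cball c r" "y \<in> cball c r"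
  shows "dist x y \<le> L * (d (q x) (q y) + A)"
proof -
  have "dist x y / L \<le> d (q x) (q y) + A" using assms unfolding qi_embedding_def by force
  then show ?thesis using \<open>L > 0\<close> by (simp add: divide_le_eq mult.commute)
qed

lemma qi_embedding_lower_via:
  assumes "Metric_space M d" "L > 0" "qi_embedding M d L A q c r"
    and "u \<in> cball c r" "v \<in> cball c r" "z \<in> M" "d (q u) z \<le> a" "d z (q v) \<le> b"
  shows "dist u v \<le> L * (a + b + A)"
proof -
  have "d (q u) (q v) \<le> a + b"
    using Metric_space.triangle[OF assms(1) qi_embedding_in_space[OF assms(3,4)] \<open>z \<in> M\<close>
        qi_embedding_in_space[OF assms(3,5)]] assms(7,8) by linarith
  then have "L * (d (q u) (q v) + A) \<le> L * (a + b + A)" using \<open>L > 0\<close> by simp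
  then show ?thesis using qi_embedding_lower[OF assms(3) \<open>L > 0\<close> assms(4,5)] by linarith
qed

lemma qi_pullback_coarse_lipschitz:
  assumes ms: "Metric_space M d" and "L > 0"
    and qi: "qi_embedding M d L A q c r" and qi': "qi_embedding M d L A q' c' r'"
    and U: "U \<subseteq> cball c r" "g ` U \<subseteq> cball c' r'"
    and close: "\<And>x. x \<in> U \<Longrightarrow> d (q x) (q' (g x)) \<le> \<delta>"
    and "a \<in> U" "b \<in> U"
  shows "dist (g a) (g b) \<le> L * L * dist a b + L * (2 * \<delta> + 2 * A)"
proof -
  have a: "a \<in> cball c r" "g a \<in> cball c' r'" and b: "b \<in> cball c r" "g b \<in> cball c' r'"
    using U \<open>a \<in> U\<close> \<open>b \<in> U\<close> by auto
  have "d (q' (g a)) (q a) \<le> \<delta>"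
    using close[OF \<open>a \<in> U\<close>] Metric_space.commute[OF ms] by metis
  moreover have "d (q a) (q' (g b)) \<le> (L * dist a b + A) + \<delta>"
    using Metric_space.triangle[OF ms qi_embedding_in_space[OF qi a(1)] qi_embedding_in_space[OF qi b(1)]
        qi_embedding_in_space[OF qi' b(2)]] qi_embedding_upper[OF qi a(1) b(1)] close[OF \<open>b \<in> U\<close>]
    by linarith
  ultimately have "dist (g a) (g b) \<le> L * (\<delta> + ((L * dist a b + A) + \<delta>) + A)"
    by (rule qi_embedding_lower_via[OF ms \<open>L > 0\<close> qi' a(2) b(2) qi_embedding_in_space[OF qi a(1)]])
  then show ?thesis by (simp add: algebra_simps)
qed

lemma hausdorff_dist_e_le_imp_close:
  assumes "hausdorff_dist_e d S T \<le> ereal a" "t \<in> T" "a < b"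
  obtains s where "s \<in> S" "d t s < b"
proof -
  have "setdist_e d t S \<le> ereal a"
    using assms(1,2) unfolding hausdorff_dist_e_def by (meson SUP_upper max.boundedE order_trans)
  also have "\<dots> < ereal b" using \<open>a < b\<close> by simp
  finally show thesis
    using that unfolding setdist_e_def by (auto simp: INF_less_iff)
qed

lemma hausdorff_dist_e_le_if_close:
  assumes "\<And>s. s \<in> S \<Longrightarrow> \<exists>t\<in>T. d s t \<le> C" "\<And>t. t \<in> T \<Longrightarrow> \<exists>s\<in>S. d t s \<le> C"
  shows "hausdorff_dist_e d S T \<le> ereal C"
proof -
  have "setdist_e d x Y \<le> ereal C" if "\<exists>y\<in>Y. d x y \<le> C" for x Y
    using that unfolding setdist_e_def by (meson INF_lower2 ereal_less_eq(3))
  then show ?thesis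
    using assms unfolding hausdorff_dist_e_def by (simp add: SUP_least)
qed

text \<open>\<open>K\<close> is the sphere distance of \<open>coarse_ball_map_covers_away_from_sphere\<close> for the pulled-back maps;
  the two terms of the maximum bound its two alternatives.\<close>
definition cover_bound :: "real \<Rightarrow> real \<Rightarrow> real \<Rightarrow> real \<Rightarrow> real" where
  "cover_bound L A A1 A2 =
    (let \<alpha> = L * L; \<beta> = L * (2 * A2 + 2 * A); \<delta> = L * (2 * A1 + 2 * A);
         K = (\<alpha> + \<beta>) + (\<alpha> * (\<alpha> + \<delta>) + \<beta>) + L * (A2 + A1 + A)
     in max (L * K + A + A1) (L * (\<alpha> + \<beta>) + A + A2))"

lemma qi_point_near_other_disk:
  fixes q q' :: "real^'n \<Rightarrow> 'a"
  assumes ms: "Metric_space M d" and "L > 0" "r \<ge> 0"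
    and qi: "qi_embedding M d L A q c r" and qi': "qi_embedding M d L A q' c' r'"
    and p: "\<And>x. x \<in> cball c r \<Longrightarrow> p x \<in> cball c' r' \<and> d (q x) (q' (p x)) \<le> A2"
    and s: "\<And>y. y \<in> sphere c' r' \<Longrightarrow> s y \<in> cball c r \<and> d (q' y) (q (s y)) \<le> A1"
    and x': "x' \<in> cball c' r'"
  shows "\<exists>b\<in>cball c r. d (q' x') (q b) \<le> cover_bound L A A1 A2"
proof -
  interpret Metric_space M d by fact
  define \<alpha> \<beta> \<delta> F where "\<alpha> = L * L" and "\<beta> = L * (2 * A2 + 2 * A)"
    and "\<delta> = L * (2 * A1 + 2 * A)" and "F = L * (A2 + A1 + A)"
  define K where "K = (\<alpha> + \<beta>) + (\<alpha> * (\<alpha> + \<delta>) + \<beta>) + F"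
  have bound: "cover_bound L A A1 A2 = max (L * K + A + A1) (L * (\<alpha> + \<beta>) + A + A2)"
    unfolding cover_bound_def K_def \<alpha>_def \<beta>_def \<delta>_def F_def by (simp add: Let_def)
  note in_M = qi_embedding_in_space[OF qi] qi_embedding_in_space[OF qi']
  have p_into: "p ` cball c r \<subseteq> cball c' r'" and s_into: "s ` sphere c' r' \<subseteq> cball c r"
    using p s by auto
  have p_coarse: "dist (p a) (p b) \<le> \<alpha> * dist a b + \<beta>" if "a \<in> cball c r" "b \<in> cball c r" for a b
    using qi_pullback_coarse_lipschitz[OF ms \<open>L > 0\<close> qi qi' order_refl p_into _ that] p
    unfolding \<alpha>_def \<beta>_def by blast
  have s_coarse: "dist (s a) (s b) \<le> \<alpha> * dist a b + \<delta>" if "a \<in> sphere c' r'" "b \<in> sphere c' r'" for a b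
    using qi_pullback_coarse_lipschitz[OF ms \<open>L > 0\<close> qi' qi sphere_cball s_into _ that] s
    unfolding \<alpha>_def \<delta>_def by blast
  have ps: "dist (p (s y)) y \<le> F" if y: "y \<in> sphere c' r'" for y
  proof -
    have y': "y \<in> cball c' r'" and sy: "s y \<in> cball c r" using y s by auto
    have "d (q' (p (s y))) (q (s y)) \<le> A2" "d (q (s y)) (q' y) \<le> A1"
      using p[OF sy] s[OF y] commute by metis+
    with qi_embedding_lower_via[OF ms \<open>L > 0\<close> qi' _ y' in_M(1)[OF sy]] p[OF sy]
    show ?thesis unfolding F_def by blast
  qed
  have "\<alpha> \<ge> 0" unfolding \<alpha>_def by simp
  from coarse_ball_map_covers_away_from_sphere
    [OF \<open>r \<ge> 0\<close> p_into p_coarse s_into s_coarse ps \<open>\<alpha> \<ge> 0\<close> \<open>\<alpha> \<ge> 0\<close> x']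
  consider (near_sphere) w where "w \<in> sphere c' r'" "dist w x' \<le> K"
    | (near_image) b where "b \<in> cball c r" "dist x' (p b) \<le> \<alpha> + \<beta>"
    unfolding K_def by blast
  then show ?thesis
  proof cases
    case near_sphere
    have w': "w \<in> cball c' r'" and sw: "s w \<in> cball c r" using near_sphere s by auto
    have "L * dist x' w \<le> L * K" using near_sphere \<open>L > 0\<close> by (simp add: dist_commute)
    then have "d (q' x') (q (s w)) \<le> L * K + A + A1"
      using triangle[OF in_M(2)[OF x'] in_M(2)[OF w'] in_M(1)[OF sw]]
        qi_embedding_upper[OF qi' x' w'] s[OF near_sphere(1)] by linarith
    then show ?thesis using sw bound by force
  next
    case near_image
    have pb: "p b \<in> cball c' r'" using near_image p by blast
    have "L * dist x' (p b) \<le> L * (\<alpha> + \<beta>)" using near_image \<open>L > 0\<close> by simp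
    then have "d (q' x') (q b) \<le> L * (\<alpha> + \<beta>) + A + A2"
      using triangle[OF in_M(2)[OF x'] in_M(2)[OF pb] in_M(1)[OF near_image(1)]]
        qi_embedding_upper[OF qi' x' pb] p[OF near_image(1)] commute[of "q' (p b)" "q b"] by linarith
    then show ?thesis using near_image(1) bound by force
  qed
qed

lemma quasidisk_hausdorff_dist_le:
  fixes q q' :: "real^'n \<Rightarrow> 'a"
  assumes ms: "Metric_space M d" and "L > 0" "r \<ge> 0"
    and qi: "qi_embedding M d L A q c r" and qi': "qi_embedding M d L A q' c' r'"
    and hd: "hausdorff_dist_e d (q ` sphere c r) (q' ` sphere c' r') \<le> ereal A1"
    and sub: "q ` cball c r \<subseteq> nbhd M d A2 (q' ` cball c' r')"
  shows "hausdorff_dist_e d (q ` cball c r) (q' ` cball c' r') \<le> ereal (max A2 (cover_bound L A (A1 + 1) A2))"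
proof -
  have "\<forall>x\<in>cball c r. \<exists>y. y \<in> cball c' r' \<and> d (q x) (q' y) < A2"
    using sub unfolding nbhd_def by blast
  from bchoice[OF this] obtain p
    where p: "\<And>x. x \<in> cball c r \<Longrightarrow> p x \<in> cball c' r' \<and> d (q x) (q' (p x)) < A2" by blast
  have "\<forall>y\<in>sphere c' r'. \<exists>x. x \<in> sphere c r \<and> d (q' y) (q x) < A1 + 1"
  proof
    fix y assume "y \<in> sphere c' r'"
    then obtain t where "t \<in> q ` sphere c r" "d (q' y) t < A1 + 1"
      using hausdorff_dist_e_le_imp_close[OF hd imageI, of y "A1 + 1"] by auto
    then show "\<exists>x. x \<in> sphere c r \<and> d (q' y) (q x) < A1 + 1" by blast
  qed
  from bchoice[OF this] obtain s
    where s: "\<And>y. y \<in> sphere c' r' \<Longrightarrow> s y \<in> sphere c r \<and> d (q' y) (q (s y)) < A1 + 1" by blast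
  have cover: "\<exists>b\<in>cball c r. d (q' x') (q b) \<le> cover_bound L A (A1 + 1) A2" if "x' \<in> cball c' r'" for x'
    using qi_point_near_other_disk[where p = p and s = s, OF ms \<open>L > 0\<close> \<open>r \<ge> 0\<close> qi qi' _ _ that]
      p s by (force simp: less_imp_le)
  show ?thesis
  proof (rule hausdorff_dist_e_le_if_close)
    show "\<exists>t\<in>q' ` cball c' r'. d u t \<le> max A2 (cover_bound L A (A1 + 1) A2)" if "u \<in> q ` cball c r" for u
      using that p by (force simp: less_imp_le max.coboundedI1)
    show "\<exists>u\<in>q ` cball c r. d t u \<le> max A2 (cover_bound L A (A1 + 1) A2)" if "t \<in> q' ` cball c' r'" for t
      using that cover by (force simp: max.coboundedI2)
  qed
qed

theorem lemma10p2:
  fixes L A A1 A2 :: real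
  assumes "L \<ge> 1" and "A \<ge> 0"
  shows "\<exists>C::real. \<forall>(M::'a set) d (q::real^'n \<Rightarrow> 'a) c r (q'::real^'n \<Rightarrow> 'a) c' r'.
     Metric_space M d \<and> r > 0 \<and> r' > 0 \<and>
     qi_embedding M d L A q c r \<and> qi_embedding M d L A q' c' r' \<and>
     hausdorff_dist_e d (q ` sphere c r) (q' ` sphere c' r') \<le> ereal A1 \<and>
     q ` cball c r \<subseteq> nbhd M d A2 (q' ` cball c' r')
     \<longrightarrow> hausdorff_dist_e d (q ` cball c r) (q' ` cball c' r') \<le> ereal C"
proof (intro exI[of _ "max A2 (cover_bound L A (A1 + 1) A2)"] allI impI, elim conjE)
  show "hausdorff_dist_e d (q ` cball c r) (q' ` cball c' r') \<le> ereal (max A2 (cover_bound L A (A1 + 1) A2))"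
    if "Metric_space M d" "r > 0" "qi_embedding M d L A q c r" "qi_embedding M d L A q' c' r'"
      "hausdorff_dist_e d (q ` sphere c r) (q' ` sphere c' r') \<le> ereal A1"
      "q ` cball c r \<subseteq> nbhd M d A2 (q' ` cball c' r')"
    for M d and q q' :: "real^'n \<Rightarrow> 'a" and c r c' r'
    using quasidisk_hausdorff_dist_le[OF that(1) _ _ that(3-6)] \<open>L \<ge> 1\<close> \<open>r > 0\<close> by simp
qed

end
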